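(* Let $G$ be a finite simple undirected graph without isolated vertices and let $v_0 \in V(G)$. Then $$\tau(G) \le \sum_{v \in N[v_0]} TDV_G(v) \le \tau(G)\cdot \gamma_t(G),$$ and both bounds are sharp (i.e., each is attained with equality for some such graph $G$ and vertex $v_0$).
   Context: A set $D \subseteq V(G)$ is a total dominating set (TDS) of $G$ if every vertex $v\in V(G)$ has a neighbor in $D$. The total domination number $\gamma_t(G)$ is the minimum cardinality of a TDS; a TDS of cardinality $\gamma_t(G)$ is a $\gamma_t(G)$-set. $\tau(G)$ denotes the number of $\gamma_t(G)$-sets, and for $v\in V(G)$, the total domination value $TDV_G(v)$ is the number of $\gamma_t(G)$-sets containing $v$. $N[v_0]=N(v_0)\cup\{v_0\}$ is the closed neighborhood of $v_0$. *)

theory Defs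
  imports Main
begin

definition simple_graph :: "'a set \<Rightarrow> ('a \<Rightarrow> 'a \<Rightarrow> bool) \<Rightarrow> bool" where
  "simple_graph V E \<longleftrightarrow> finite V \<and> (\<forall>u v. E u v \<longrightarrow> u \<in> V \<and> v \<in> V)
     \<and> (\<forall>u v. E u v \<longrightarrow> E v u) \<and> (\<forall>v. \<not> E v v)"

definition no_isolated :: "'a set \<Rightarrow> ('a \<Rightarrow> 'a \<Rightarrow> bool) \<Rightarrow> bool" where
  "no_isolated V E \<longleftrightarrow> (\<forall>v\<in>V. \<exists>u. E v u)"

definition open_nbhd :: "('a \<Rightarrow> 'a \<Rightarrow> bool) \<Rightarrow> 'a \<Rightarrow> 'a set" where
  "open_nbhd E v = {u. E v u}"

definition closed_nbhd :: "('a \<Rightarrow> 'a \<Rightarrow> bool) \<Rightarrow> 'a \<Rightarrow> 'a set" where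
  "closed_nbhd E v = insert v (open_nbhd E v)"

definition is_tds :: "'a set \<Rightarrow> ('a \<Rightarrow> 'a \<Rightarrow> bool) \<Rightarrow> 'a set \<Rightarrow> bool" where
  "is_tds V E D \<longleftrightarrow> D \<subseteq> V \<and> (\<forall>v\<in>V. \<exists>u\<in>D. E v u)"

definition gamma_t :: "'a set \<Rightarrow> ('a \<Rightarrow> 'a \<Rightarrow> bool) \<Rightarrow> nat" where
  "gamma_t V E = Min (card ` {D. is_tds V E D})"

definition gamma_t_sets :: "'a set \<Rightarrow> ('a \<Rightarrow> 'a \<Rightarrow> bool) \<Rightarrow> 'a set set" where
  "gamma_t_sets V E = {D. is_tds V E D \<and> card D = gamma_t V E}"

definition tau :: "'a set \<Rightarrow> ('a \<Rightarrow> 'a \<Rightarrow> bool) \<Rightarrow> nat" where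
  "tau V E = card (gamma_t_sets V E)"

definition TDV :: "'a set \<Rightarrow> ('a \<Rightarrow> 'a \<Rightarrow> bool) \<Rightarrow> 'a \<Rightarrow> nat" where
  "TDV V E v = card {D \<in> gamma_t_sets V E. v \<in> D}"

end

theory Submission
  imports Defs
begin

text \<open>Counting the pairs (v, D) with v \<in> N[v0] \<inter> D over the gamma_t-sets D turns
  the sum of total domination values into \<Sum>_D |N[v0] \<inter> D|. Each summand is at least 1,
  because D dominates v0, and at most gamma_t(G) = |D|. Both bounds are attained by paths:
  in P_4 the unique gamma_t-set {1, 2} meets N[0] = {0, 1} once, and in P_2 the unique
  gamma_t-set is N[0] itself.\<close>

lemma sum_card_member_eq_sum_card_Int:
  assumes "finite A" and "finite S"
  shows "(\<Sum>v\<in>A. card {D \<in> S. v \<in> D}) = (\<Sum>D\<in>S. card (A \<inter> D))"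
proof -
  have "(\<Sum>v\<in>A. card {D \<in> S. v \<in> D}) = (\<Sum>v\<in>A. \<Sum>D\<in>S. if v \<in> D then 1 else 0)"
    using assms(2) by (simp add: sum.If_cases Int_def)
  also have "\<dots> = (\<Sum>D\<in>S. \<Sum>v\<in>A. if v \<in> D then 1 else 0)"
    by (rule sum.swap)
  also have "\<dots> = (\<Sum>D\<in>S. card (A \<inter> D))"
    using assms(1) by (simp add: sum.If_cases Int_def)
  finally show ?thesis .
qed

lemma finite_tds:
  assumes "finite V"
  shows "finite {D. is_tds V E D}"
  by (rule finite_subset[of _ "Pow V"]) (auto simp: is_tds_def assms)

lemma finite_gamma_t_sets:
  assumes "finite V"
  shows "finite (gamma_t_sets V E)"
  using finite_tds[OF assms] by (rule rev_finite_subset) (auto simp: gamma_t_sets_def)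

lemma gamma_t_setsD:
  assumes "D \<in> gamma_t_sets V E"
  shows "is_tds V E D" and "card D = gamma_t V E"
  using assms by (simp_all add: gamma_t_sets_def)

lemma sum_TDV_eq_sum_card_Int:
  assumes "finite V" and "finite A"
  shows "(\<Sum>v\<in>A. TDV V E v) = (\<Sum>D\<in>gamma_t_sets V E. card (A \<inter> D))"
  unfolding TDV_def
  using assms by (simp add: sum_card_member_eq_sum_card_Int finite_gamma_t_sets)

lemma tau_le_sum_TDV:
  assumes "finite V" and "finite A"
    and meets: "\<And>D. D \<in> gamma_t_sets V E \<Longrightarrow> A \<inter> D \<noteq> {}"
  shows "tau V E \<le> (\<Sum>v\<in>A. TDV V E v)"
proof -
  have "tau V E = (\<Sum>D\<in>gamma_t_sets V E. 1)"
    by (simp add: tau_def)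
  also have "\<dots> \<le> (\<Sum>D\<in>gamma_t_sets V E. card (A \<inter> D))"
    using meets \<open>finite A\<close> by (intro sum_mono) (simp add: Suc_leI card_gt_0_iff)
  finally show ?thesis
    using assms(1,2) by (simp add: sum_TDV_eq_sum_card_Int)
qed

lemma sum_TDV_le_tau_mult_gamma_t:
  assumes "finite V" and "finite A"
  shows "(\<Sum>v\<in>A. TDV V E v) \<le> tau V E * gamma_t V E"
proof -
  have "card (A \<inter> D) \<le> gamma_t V E" if "D \<in> gamma_t_sets V E" for D
  proof -
    have "finite D"
      using gamma_t_setsD(1)[OF that] \<open>finite V\<close> by (auto simp: is_tds_def intro: finite_subset)
    then show ?thesis
      using card_mono[of D "A \<inter> D"] gamma_t_setsD(2)[OF that] by simp
  qed
  then have "(\<Sum>D\<in>gamma_t_sets V E. card (A \<inter> D)) \<le> (\<Sum>D\<in>gamma_t_sets V E. gamma_t V E)"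
    by (rule sum_mono)
  then show ?thesis
    using assms by (simp add: sum_TDV_eq_sum_card_Int tau_def)
qed

lemma finite_closed_nbhd:
  assumes "simple_graph V E"
  shows "finite (closed_nbhd E v)"
proof -
  have "open_nbhd E v \<subseteq> V"
    using assms by (auto simp: simple_graph_def open_nbhd_def)
  then show ?thesis
    using assms by (auto simp: simple_graph_def closed_nbhd_def intro: finite_subset)
qed

lemma is_tds_Int_closed_nbhd_nonempty:
  assumes "is_tds V E D" and "v \<in> V"
  shows "closed_nbhd E v \<inter> D \<noteq> {}"
  using assms by (fastforce simp: is_tds_def closed_nbhd_def open_nbhd_def)

text \<open>Isolated vertices are allowed: then there is no total dominating set and both sides
  vanish.\<close>

lemma closed_nbhd_TDV_bounds:
  assumes "simple_graph V E" and "v0 \<in> V"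
  shows "tau V E \<le> (\<Sum>v\<in>closed_nbhd E v0. TDV V E v)"
    and "(\<Sum>v\<in>closed_nbhd E v0. TDV V E v) \<le> tau V E * gamma_t V E"
proof -
  have "finite V"
    using assms(1) by (simp add: simple_graph_def)
  moreover have "finite (closed_nbhd E v0)"
    using assms(1) by (rule finite_closed_nbhd)
  moreover have "closed_nbhd E v0 \<inter> D \<noteq> {}" if "D \<in> gamma_t_sets V E" for D
    using gamma_t_setsD(1)[OF that] assms(2) by (rule is_tds_Int_closed_nbhd_nonempty)
  ultimately show "tau V E \<le> (\<Sum>v\<in>closed_nbhd E v0. TDV V E v)"
    and "(\<Sum>v\<in>closed_nbhd E v0. TDV V E v) \<le> tau V E * gamma_t V E"
    by (simp_all add: tau_le_sum_TDV sum_TDV_le_tau_mult_gamma_t)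
qed

lemma gamma_t_sets_eq_singleton:
  assumes "finite V" and "T \<subseteq> V"
    and tds_iff: "\<And>D. is_tds V E D \<longleftrightarrow> T \<subseteq> D \<and> D \<subseteq> V"
  shows "gamma_t_sets V E = {T}" and "gamma_t V E = card T"
proof -
  have card_le: "card T \<le> card D" and card_eq_imp: "card D = card T \<Longrightarrow> D = T"
    if "is_tds V E D" for D
  proof -
    from that have "T \<subseteq> D" "D \<subseteq> V"
      by (simp_all add: tds_iff)
    moreover from \<open>D \<subseteq> V\<close> have "finite D"
      using \<open>finite V\<close> by (rule finite_subset)
    ultimately show "card T \<le> card D" and "card D = card T \<Longrightarrow> D = T"
      using card_subset_eq[of D T] by (simp_all add: card_mono)
  qed
  have "is_tds V E T"
    using \<open>T \<subseteq> V\<close> by (simp add: tds_iff)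
  moreover have "finite {D. is_tds V E D}"
    using \<open>finite V\<close> by (rule finite_tds)
  ultimately show gamma: "gamma_t V E = card T"
    unfolding gamma_t_def using card_le by (intro Min_eqI finite_imageI) blast+
  show "gamma_t_sets V E = {T}"
    unfolding gamma_t_sets_def gamma using card_eq_imp \<open>is_tds V E T\<close> by auto
qed

lemma singleton_gamma_t_sets_TDV:
  assumes "gamma_t_sets V E = {T}"
  shows "tau V E = 1" and "TDV V E v = (if v \<in> T then 1 else 0)"
proof -
  have "{D \<in> {T}. v \<in> D} = (if v \<in> T then {T} else {})"
    by auto
  then show "tau V E = 1" and "TDV V E v = (if v \<in> T then 1 else 0)"
    using assms by (simp_all add: tau_def TDV_def)
qed

definition path_edge :: "nat \<Rightarrow> nat \<Rightarrow> nat \<Rightarrow> bool" where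
  "path_edge n u v \<longleftrightarrow> u < n \<and> v < n \<and> (u = Suc v \<or> v = Suc u)"

lemma simple_graph_path: "simple_graph {..<n} (path_edge n)"
  by (auto simp: simple_graph_def path_edge_def)

lemma no_isolated_path:
  assumes "2 \<le> n"
  shows "no_isolated {..<n} (path_edge n)"
  unfolding no_isolated_def path_edge_def
proof
  fix v assume "v \<in> {..<n}"
  show "\<exists>u. v < n \<and> u < n \<and> (v = Suc u \<or> u = Suc v)"
  proof (cases "Suc v < n")
    case False
    with \<open>v \<in> {..<n}\<close> assms have "v = Suc (v - 1)" "v < n"
      by auto
    then show ?thesis
      by (intro exI[of _ "v - 1"]) simp
  qed (use \<open>v \<in> {..<n}\<close> in blast)
qed

lemma closed_nbhd_path_0:
  assumes "2 \<le> n"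
  shows "closed_nbhd (path_edge n) 0 = {0, 1}"
  using assms by (auto simp: closed_nbhd_def open_nbhd_def path_edge_def)

lemma is_tds_P4_iff: "is_tds {..<4} (path_edge 4) D \<longleftrightarrow> {1, 2} \<subseteq> D \<and> D \<subseteq> {..<4}"
proof -
  have vertices: "{..<4::nat} = {0, 1, 2, 3}"
    by auto
  show ?thesis
    unfolding is_tds_def path_edge_def vertices by (auto simp: eval_nat_numeral) blast+
qed

lemma is_tds_P2_iff: "is_tds {..<2} (path_edge 2) D \<longleftrightarrow> {0, 1} \<subseteq> D \<and> D \<subseteq> {..<2}"
  unfolding is_tds_def path_edge_def lessThan_nat_numeral by (auto simp: eval_nat_numeral)

lemma gamma_t_sets_P4: "gamma_t_sets {..<4} (path_edge 4) = {{1, 2}}"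
  by (rule gamma_t_sets_eq_singleton(1)[OF _ _ is_tds_P4_iff]) auto

lemma gamma_t_sets_P2: "gamma_t_sets {..<2} (path_edge 2) = {{0, 1}}"
  by (rule gamma_t_sets_eq_singleton(1)[OF _ _ is_tds_P2_iff]) auto

lemma gamma_t_P2: "gamma_t {..<2} (path_edge 2) = 2"
  by (subst gamma_t_sets_eq_singleton(2)[OF _ _ is_tds_P2_iff]) auto

lemma lower_bound_attained_P4:
  "\<exists>(V :: nat set) E v0. simple_graph V E \<and> no_isolated V E \<and> v0 \<in> V \<and>
     tau V E = (\<Sum>v\<in>closed_nbhd E v0. TDV V E v)"
proof -
  have "tau {..<4} (path_edge 4) = (\<Sum>v\<in>closed_nbhd (path_edge 4) 0. TDV {..<4} (path_edge 4) v)"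
    by (simp add: closed_nbhd_path_0 singleton_gamma_t_sets_TDV[OF gamma_t_sets_P4])
  then show ?thesis
    by (intro exI[of _ "{..<4}"] exI[of _ "path_edge 4"] exI[of _ 0] conjI
        simple_graph_path no_isolated_path) simp_all
qed

lemma upper_bound_attained_P2:
  "\<exists>(V :: nat set) E v0. simple_graph V E \<and> no_isolated V E \<and> v0 \<in> V \<and>
     (\<Sum>v\<in>closed_nbhd E v0. TDV V E v) = tau V E * gamma_t V E"
proof -
  have "(\<Sum>v\<in>closed_nbhd (path_edge 2) 0. TDV {..<2} (path_edge 2) v)
          = tau {..<2} (path_edge 2) * gamma_t {..<2} (path_edge 2)"
    by (simp add: closed_nbhd_path_0 gamma_t_P2 singleton_gamma_t_sets_TDV[OF gamma_t_sets_P2])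
  then show ?thesis
    by (intro exI[of _ "{..<2}"] exI[of _ "path_edge 2"] exI[of _ 0] conjI
        simple_graph_path no_isolated_path) simp_all
qed

theorem proposition2p4:
  shows "(\<forall>(V :: 'a set) E v0. simple_graph V E \<and> no_isolated V E \<and> v0 \<in> V \<longrightarrow>
            tau V E \<le> (\<Sum>v\<in>closed_nbhd E v0. TDV V E v) \<and>
            (\<Sum>v\<in>closed_nbhd E v0. TDV V E v) \<le> tau V E * gamma_t V E)
       \<and> (\<exists>(V :: nat set) E v0. simple_graph V E \<and> no_isolated V E \<and> v0 \<in> V \<and>
            tau V E = (\<Sum>v\<in>closed_nbhd E v0. TDV V E v))
       \<and> (\<exists>(V :: nat set) E v0. simple_graph V E \<and> no_isolated V E \<and> v0 \<in> V \<and>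
            (\<Sum>v\<in>closed_nbhd E v0. TDV V E v) = tau V E * gamma_t V E)"
  using lower_bound_attained_P4 upper_bound_attained_P2 by (blast intro: closed_nbhd_TDV_bounds)

end
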